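(* For every $k\ge 0$, as formal power series in $z$, $$\sum_{n\ge 0} e(n,n-k)z^n=\frac{z^k}{(1-z)^{2\lfloor\frac{k+1}{2}\rfloor+1}(1+z^2)^{\lfloor\frac{k}{2}\rfloor+1}}\,L_{k+2}(-z).$$
   Context: $e(n,j)$ is the number of $j$-element subsets of $\{1,\dots,n\}$ with even sum (the empty set counts as even; $e(n,j)=0$ for $j<0$). Losanitsch's triangle $(L(n,k))$ is defined by $L(0,k)=[k=0]$, $L(1,k)=[k\le 1]$ for $k\ge0$, $L(n,k)=0$ for $k<0$, and for $n\ge 2$: $L(n,k)=L(n-2,k)+\binom{n-2}{k-1}+L(n-2,k-2)$ (with $\binom{m}{j}=0$ for $j<0$ or $j>m$). The Losanitsch polynomials are $L_n(x)=\sum_{k=0}^n L(n,k)x^k$. *)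

theory Defs
  imports "HOL-Computational_Algebra.Computational_Algebra"
begin

definition e_even :: "nat \<Rightarrow> int \<Rightarrow> nat" where
  "e_even n j = (if j < 0 then 0
     else card {S. S \<subseteq> {1..n} \<and> card S = nat j \<and> even (\<Sum>S)})"

definition binom_int :: "nat \<Rightarrow> int \<Rightarrow> nat" where
  "binom_int m j = (if j < 0 then 0 else m choose (nat j))"

fun losanitsch :: "nat \<Rightarrow> int \<Rightarrow> nat" where
  "losanitsch 0 k = (if k = 0 then 1 else 0)"
| "losanitsch (Suc 0) k = (if 0 \<le> k \<and> k \<le> 1 then 1 else 0)"
| "losanitsch (Suc (Suc n)) k =
     (if k < 0 then 0
      else losanitsch n k + binom_int n (k - 1) + losanitsch n (k - 2))"

definition losanitsch_poly :: "nat \<Rightarrow> rat poly" where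
  "losanitsch_poly n = (\<Sum>k\<le>n. monom (of_nat (losanitsch n (int k))) k)"

end

theory Submission
  imports Defs
begin

text \<open>Write \<open>\<delta>(n,j)\<close> for the number of \<open>j\<close>-subsets of \<open>{1..n}\<close> with even sum
minus the number with odd sum, so that \<open>2 e(n,j) = C(n,j) + \<delta>(n,j)\<close>. Adjoining the element \<open>n+1\<close> gives
\<open>\<delta>(n+1,j) = \<delta>(n,j) - (-1)^n \<delta>(n,j-1)\<close>, and two such steps give
\<open>\<delta>(n+2,j) + \<delta>(n,j-2) = \<delta>(n,j)\<close>. For the diagonal series \<open>H_k(z) = \<Sum>\<^sub>n \<delta>(n,n-k) z^n\<close>
this says \<open>(1+z^2) H_{k+2} = z^2 H_k\<close>, whence
\<open>H_k (1+z^2)^{\<lfloor>k/2\<rfloor>+1} = z^k (1-z)^{1 - k mod 2}\<close>, while the binomial part contributes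
\<open>\<Sum>\<^sub>n C(n,k) z^n = z^k/(1-z)^{k+1}\<close>. On the other side, the Losanitsch recurrence
\<open>L_{n+2}(x) = (1+x^2) L_n(x) + x (1+x)^n\<close> has the closed form
\<open>2 L_n(x) = (1+x)^n + (1+x)^{n mod 2} (1+x^2)^{\<lfloor>n/2\<rfloor>}\<close>, and substituting \<open>x = -z\<close> the
two expressions match term by term.\<close>

lemma sum_Pow_insert:
  assumes "finite A" "a \<notin> A"
  shows "(\<Sum>S\<in>Pow (insert a A). f S) = (\<Sum>S\<in>Pow A. f S) + (\<Sum>S\<in>Pow A. f (insert a S))"
proof -
  have "inj_on (insert a) (Pow A)"
    using assms(2) by (auto intro!: inj_onI)
  then show ?thesis
    unfolding Pow_insert using assms
    by (subst sum.union_disjoint) (auto simp: sum.reindex)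
qed

text \<open>The subset size \<open>j\<close> ranges over the integers (the sum is empty for \<open>j < 0\<close>), so that
  the recurrences below hold without boundary cases.\<close>
definition parity_balance :: "nat \<Rightarrow> int \<Rightarrow> int" where
  "parity_balance n j = (\<Sum>S\<in>Pow {1..n}. if int (card S) = j then (-1) ^ \<Sum>S else 0)"

lemma parity_balance_Suc:
  "parity_balance (Suc n) j = parity_balance n j - (-1) ^ n * parity_balance n (j - 1)"
proof -
  have "(if int (card (insert (Suc n) S)) = j then (-1) ^ \<Sum>(insert (Suc n) S) else 0)
      = - ((-1) ^ n * (if int (card S) = j - 1 then (-1) ^ \<Sum>S else 0 :: int))"
    if "S \<in> Pow {1..n}" for S
  proof -
    have "finite S" "Suc n \<notin> S" using that finite_subset by fastforce+
    then show ?thesis by (simp add: power_add)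
  qed
  moreover have "{1..Suc n} = insert (Suc n) {1..n}" by auto
  ultimately show ?thesis
    unfolding parity_balance_def by (simp add: sum_Pow_insert sum_distrib_left sum_negf)
qed

lemma parity_balance_eq_0: "j < 0 \<or> int n < j \<Longrightarrow> parity_balance n j = 0"
proof -
  assume j: "j < 0 \<or> int n < j"
  have "int (card S) \<noteq> j" if "S \<subseteq> {1..n}" for S
    using j card_mono[OF _ that] by fastforce
  then show ?thesis by (simp add: parity_balance_def)
qed

lemma parity_balance_0 [simp]: "parity_balance n 0 = 1"
  by (induction n) (simp_all add: parity_balance_def [of 0] parity_balance_Suc parity_balance_eq_0)

lemma parity_balance_Suc_Suc:
  "parity_balance (Suc (Suc n)) j + parity_balance n (j - 2) = parity_balance n j"
  by (simp add: parity_balance_Suc algebra_simps)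

lemma e_even_parity_balance:
  "2 * int (e_even n j) = int (binom_int n j) + parity_balance n j"
proof (cases "j < 0")
  case True
  then show ?thesis by (simp add: e_even_def binom_int_def parity_balance_eq_0)
next
  case False
  define T where "T = {S \<in> Pow {1..n}. card S = nat j}"
  have "finite T" by (simp add: T_def)
  have "parity_balance n j = (\<Sum>S\<in>T. (-1) ^ \<Sum>S)"
    using False unfolding parity_balance_def T_def
    by (subst sum.inter_filter[symmetric]) (auto intro!: sum.cong)
  also have "\<dots> = (\<Sum>S\<in>T. 2 * (if even (\<Sum>S) then 1 else 0) - 1)"
    by (intro sum.cong) auto
  also have "\<dots> = 2 * int (card {S \<in> T. even (\<Sum>S)}) - int (card T)"
    using \<open>finite T\<close>
    by (simp add: sum_subtractf sum_distrib_left[symmetric] flip: sum.inter_filter)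
  also have "card T = binom_int n j"
    using False n_subsets[of "{1..n}" "nat j"] by (simp add: T_def binom_int_def)
  also have "{S \<in> T. even (\<Sum>S)} = {S. S \<subseteq> {1..n} \<and> card S = nat j \<and> even (\<Sum>S)}"
    by (auto simp: T_def)
  finally show ?thesis using False by (simp add: e_even_def)
qed

definition parity_balance_fps :: "int \<Rightarrow> rat fps" where
  "parity_balance_fps k = Abs_fps (\<lambda>n. of_int (parity_balance n (int n - k)))"

lemma parity_balance_fps_rec:
  "(1 + fps_X\<^sup>2) * parity_balance_fps k = fps_X\<^sup>2 * parity_balance_fps (k - 2)
     + fps_const (of_int (parity_balance 0 (- k))) + fps_const (of_int (parity_balance 1 (1 - k))) * fps_X"
proof (rule fps_ext)
  fix n
  show "((1 + fps_X\<^sup>2) * parity_balance_fps k) $ n = (fps_X\<^sup>2 * parity_balance_fps (k - 2)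
     + fps_const (of_int (parity_balance 0 (- k))) + fps_const (of_int (parity_balance 1 (1 - k))) * fps_X) $ n"
  proof (cases "n < 2")
    case True
    then have "n = 0 \<or> n = 1" by auto
    then show ?thesis by (auto simp: distrib_right fps_X_power_mult_nth parity_balance_fps_def)
  next
    case False
    then obtain m where "n = Suc (Suc m)" by (metis add_2_eq_Suc le_Suc_ex not_less)
    moreover have "of_int (parity_balance (Suc (Suc m)) (int m + 2 - k)) + of_int (parity_balance m (int m - k))
       = (of_int (parity_balance m (int m + 2 - k)) :: rat)"
      using parity_balance_Suc_Suc[of m "int m + 2 - k"] by (simp add: algebra_simps flip: of_int_add)
    ultimately show ?thesis
      by (simp add: distrib_right fps_X_power_mult_nth parity_balance_fps_def algebra_simps)
  qed
qed

lemma parity_balance_fps_closed: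
  "parity_balance_fps (int k) * (1 + fps_X\<^sup>2) ^ (k div 2 + 1) = fps_X ^ k * (1 - fps_X) ^ (1 - k mod 2)"
proof (induction k rule: nat_induct2)
  case 0
  have "parity_balance 1 1 = -1" using parity_balance_Suc[of 0 1] by (simp add: parity_balance_eq_0)
  moreover have "parity_balance_fps (-2) = 0"
    by (rule fps_ext) (simp add: parity_balance_fps_def parity_balance_eq_0)
  ultimately show ?case using parity_balance_fps_rec[of 0] by (simp add: mult.commute)
next
  case 1
  have "parity_balance_fps (-1) = 0"
    by (rule fps_ext) (simp add: parity_balance_fps_def parity_balance_eq_0)
  then show ?case using parity_balance_fps_rec[of 1] by (simp add: mult.commute parity_balance_eq_0)
next
  case (step k)
  have rec: "(1 + fps_X\<^sup>2) * parity_balance_fps (int (k + 2))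
      = fps_X\<^sup>2 * parity_balance_fps (int k)"
    using parity_balance_fps_rec[of "int (k + 2)"] by (simp add: parity_balance_eq_0)
  have exp: "(k + 2) div 2 + 1 = Suc (k div 2 + 1)" by simp
  have "parity_balance_fps (int (k + 2)) * (1 + fps_X\<^sup>2) ^ ((k + 2) div 2 + 1)
      = ((1 + fps_X\<^sup>2) * parity_balance_fps (int (k + 2))) * (1 + fps_X\<^sup>2) ^ (k div 2 + 1)"
    unfolding exp power_Suc by (simp only: ac_simps)
  also have "\<dots> = fps_X\<^sup>2 * (parity_balance_fps (int k) * (1 + fps_X\<^sup>2) ^ (k div 2 + 1))"
    unfolding rec by (simp only: ac_simps)
  also have "\<dots> = fps_X ^ (k + 2) * (1 - fps_X) ^ (1 - (k + 2) mod 2)"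
    unfolding step.IH by (simp only: mod_add_self2 power_add ac_simps)
  finally show ?case .
qed

definition binomial_fps :: "nat \<Rightarrow> rat fps" where
  "binomial_fps k = Abs_fps (\<lambda>n. of_nat (n choose k))"

lemma binomial_fps_mult_power: "binomial_fps k * (1 - fps_X) ^ (k + 1) = fps_X ^ k"
proof -
  have unit: "((1 - fps_X) ^ (k + 1) :: rat fps) $ 0 \<noteq> 0"
    by (simp add: fps_nth_power_0)
  have inv: "inverse ((1 - fps_X) ^ (k + 1) :: rat fps) = Abs_fps (\<lambda>m. of_nat ((k + m) choose m))"
    using one_minus_const_fps_X_neg_power'[of "k + 1" "1 :: rat"] by simp
  have "binomial_fps k = fps_X ^ k * inverse ((1 - fps_X) ^ (k + 1))"
  proof (rule fps_ext)
    fix n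
    show "binomial_fps k $ n = (fps_X ^ k * inverse ((1 - fps_X) ^ (k + 1))) $ n"
    proof (cases "k \<le> n")
      case True
      then show ?thesis
        unfolding inv using binomial_symmetric[OF True] by (simp add: binomial_fps_def fps_X_power_mult_nth)
    qed (simp add: binomial_fps_def fps_X_power_mult_nth)
  qed
  then show ?thesis by (simp only: mult.assoc inverse_mult_eq_1[OF unit] mult_1_right)
qed

lemma losanitsch_eq_0: "k < 0 \<or> int n < k \<Longrightarrow> losanitsch n k = 0"
  by (induction n k rule: losanitsch.induct) (auto simp: binom_int_def)

lemma coeff_losanitsch_poly: "coeff (losanitsch_poly n) i = of_nat (losanitsch n (int i))"
proof -
  have "coeff (losanitsch_poly n) i = (\<Sum>k\<le>n. if k = i then of_nat (losanitsch n (int k)) else 0)"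
    unfolding losanitsch_poly_def coeff_sum coeff_monom by (rule sum.cong) auto
  then show ?thesis using losanitsch_eq_0[of "int i" n] by (simp add: sum.delta)
qed

lemma coeff_one_plus_X_power: "coeff ([:1, 1:] ^ n :: 'a :: comm_semiring_1 poly) i = of_nat (n choose i)"
proof (cases "i \<le> n")
  case False
  have "degree ([:1, 1:] ^ n :: 'a poly) \<le> n"
    by (rule order.trans[OF degree_power_le]) simp
  with False show ?thesis by (simp add: coeff_eq_0 binomial_eq_0)
qed (simp add: coeff_linear_poly_power)

lemma losanitsch_poly_Suc_Suc:
  "losanitsch_poly (Suc (Suc n)) = [:1, 0, 1:] * losanitsch_poly n + [:0, 1:] * [:1, 1:] ^ n"
proof (rule poly_eqI)
  fix i
  consider "i = 0" | "i = 1" | j where "i = Suc (Suc j)"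
    by (metis One_nat_def not0_implies_Suc)
  then show "coeff (losanitsch_poly (Suc (Suc n))) i
      = coeff ([:1, 0, 1:] * losanitsch_poly n + [:0, 1:] * [:1, 1:] ^ n) i"
  proof cases
    case 3
    have shift: "int (Suc (Suc j)) - 1 = int (Suc j)" "int (Suc (Suc j)) - 2 = int j" by auto
    show ?thesis
      unfolding 3
      by (simp add: shift coeff_losanitsch_poly coeff_one_plus_X_power binom_int_def del: of_nat_Suc)
  qed (simp_all add: coeff_losanitsch_poly coeff_one_plus_X_power binom_int_def losanitsch_eq_0)
qed

lemma double_losanitsch_poly:
  "2 * losanitsch_poly n = [:1, 1:] ^ n + [:1, 1:] ^ (n mod 2) * [:1, 0, 1:] ^ (n div 2)"
proof (induction n rule: nat_induct2)
  case 0
  then show ?case by (simp add: losanitsch_poly_def)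
next
  case 1
  have "losanitsch_poly 1 = [:1, 1:]"
    by (simp add: losanitsch_poly_def monom_altdef one_pCons)
  then show ?case unfolding mult_2 by simp
next
  case (step n)
  have square: "[:1, 0, 1:] + 2 * [:0, 1:] = [:1, 1 :: rat:] ^ 2"
    by (simp add: power2_eq_square numeral_poly)
  have "2 * losanitsch_poly (n + 2) = [:1, 0, 1:] * (2 * losanitsch_poly n) + 2 * [:0, 1:] * [:1, 1:] ^ n"
    using losanitsch_poly_Suc_Suc[of n] by (simp add: algebra_simps)
  also have "\<dots> = ([:1, 0, 1:] + 2 * [:0, 1:]) * [:1, 1:] ^ n
      + [:1, 1:] ^ (n mod 2) * [:1, 0, 1:] ^ (n div 2 + 1)"
    unfolding step.IH by (simp add: algebra_simps)
  also have "\<dots> = [:1, 1:] ^ (n + 2) + [:1, 1:] ^ ((n + 2) mod 2) * [:1, 0, 1:] ^ ((n + 2) div 2)"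
    unfolding square by (simp only: power_add mod_add_self2 div_add_self2[of 2, simplified] ac_simps)
  finally show ?case .
qed

lemma pcompose_power_left: "pcompose (p ^ n) q = pcompose p q ^ n"
  by (induction n) (simp_all add: pcompose_mult pcompose_1)

lemma double_fps_losanitsch_neg:
  "2 * fps_of_poly (pcompose (losanitsch_poly n) [:0, -1:])
     = (1 - fps_X) ^ n + (1 - fps_X) ^ (n mod 2) * (1 + fps_X\<^sup>2) ^ (n div 2)"
proof -
  have "2 * fps_of_poly (pcompose (losanitsch_poly n) [:0, -1:])
      = fps_of_poly (pcompose (2 * losanitsch_poly n) [:0, -1:])"
    by (simp add: numeral_poly pcompose_smult fps_of_poly_smult)
  also have "pcompose (2 * losanitsch_poly n) [:0, -1:]
      = [:1, -1:] ^ n + [:1, -1:] ^ (n mod 2) * [:1, 0, 1:] ^ (n div 2)"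
    unfolding double_losanitsch_poly
    by (simp add: pcompose_add pcompose_mult pcompose_power_left pcompose_pCons)
  also have "fps_of_poly \<dots> = (1 - fps_X) ^ n + (1 - fps_X) ^ (n mod 2) * (1 + fps_X\<^sup>2) ^ (n div 2)"
    by (simp add: fps_of_poly_add fps_of_poly_mult fps_of_poly_power fps_of_poly_pCons
        fps_of_poly_const power2_eq_square)
  finally show ?thesis .
qed

definition e_even_fps :: "nat \<Rightarrow> rat fps" where
  "e_even_fps k = Abs_fps (\<lambda>n. of_nat (e_even n (int n - int k)))"

lemma double_e_even_fps: "2 * e_even_fps k = binomial_fps k + parity_balance_fps (int k)"
proof (rule fps_ext)
  fix n
  have "binom_int n (int n - int k) = n choose k"
  proof (cases "k \<le> n")
    case True
    then have "nat (int n - int k) = n - k" by simp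
    then show ?thesis using True by (simp add: binom_int_def binomial_symmetric[OF True])
  qed (simp add: binom_int_def binomial_eq_0)
  then have "2 * rat_of_nat (e_even n (int n - int k))
      = of_nat (n choose k) + of_int (parity_balance n (int n - int k))"
    using arg_cong[OF e_even_parity_balance[of n "int n - int k"], where f = "of_int :: int \<Rightarrow> rat"]
    by simp
  then show "(2 * e_even_fps k) $ n = (binomial_fps k + parity_balance_fps (int k)) $ n"
    by (simp add: e_even_fps_def binomial_fps_def parity_balance_fps_def numeral_fps_const)
qed

lemma e_even_fps_mult_denominator:
  "e_even_fps k * ((1 - fps_X) ^ (2 * ((k + 1) div 2) + 1) * (1 + fps_X\<^sup>2) ^ (k div 2 + 1))
     = fps_X ^ k * fps_of_poly (pcompose (losanitsch_poly (k + 2)) [:0, -1:])"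
proof -
  define E where "E = 2 * ((k + 1) div 2) + 1"
  define P :: "rat fps" where "P = (1 + fps_X\<^sup>2) ^ (k div 2 + 1)"
  have exponents: "E = (k + 1) + k mod 2" "k + 2 = (1 - k mod 2) + E"
    unfolding E_def by presburger+
  have powers: "(1 - fps_X) ^ E = (1 - fps_X) ^ (k + 1) * (1 - fps_X) ^ (k mod 2)"
      "(1 - fps_X) ^ (1 - k mod 2) * (1 - fps_X) ^ E = (1 - fps_X :: rat fps) ^ (k + 2)"
    by (simp only: exponents(1) power_add) (simp only: exponents(2) power_add)
  have "2 * (e_even_fps k * ((1 - fps_X) ^ E * P))
      = binomial_fps k * (1 - fps_X) ^ E * P + parity_balance_fps (int k) * P * (1 - fps_X) ^ E"
    unfolding mult.assoc [symmetric] double_e_even_fps by (simp only: distrib_right distrib_left ac_simps)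
  also have "\<dots> = fps_X ^ k * ((1 - fps_X) ^ (k mod 2) * P + (1 - fps_X) ^ (k + 2))"
  proof -
    have "binomial_fps k * (1 - fps_X) ^ E = fps_X ^ k * (1 - fps_X) ^ (k mod 2)"
      unfolding powers(1) mult.assoc [symmetric] binomial_fps_mult_power ..
    moreover have "parity_balance_fps (int k) * P * (1 - fps_X) ^ E = fps_X ^ k * (1 - fps_X) ^ (k + 2)"
      unfolding P_def parity_balance_fps_closed mult.assoc powers(2) ..
    ultimately show ?thesis by (simp only: distrib_left ac_simps)
  qed
  also have "\<dots> = 2 * (fps_X ^ k * fps_of_poly (pcompose (losanitsch_poly (k + 2)) [:0, -1:]))"
  proof -
    have "2 * fps_of_poly (pcompose (losanitsch_poly (k + 2)) [:0, -1:])
        = (1 - fps_X) ^ (k mod 2) * P + (1 - fps_X) ^ (k + 2)"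
      unfolding double_fps_losanitsch_neg P_def
      by (simp only: mod_add_self2 div_add_self2[of 2, simplified] add.commute)
    then show ?thesis by (simp only: mult.left_commute[of 2])
  qed
  finally show ?thesis unfolding E_def P_def by simp
qed

theorem proposition3p4:
  fixes k :: nat
  shows "Abs_fps (\<lambda>n. of_nat (e_even n (int n - int k)) :: rat) =
    fps_X ^ k / ((1 - fps_X) ^ (2 * ((k + 1) div 2) + 1) * (1 + fps_X ^ 2) ^ (k div 2 + 1))
    * fps_of_poly (pcompose (losanitsch_poly (k + 2)) [:0, -1:])"
proof -
  define D :: "rat fps"
    where "D = (1 - fps_X) ^ (2 * ((k + 1) div 2) + 1) * (1 + fps_X ^ 2) ^ (k div 2 + 1)"
  have "D $ 0 \<noteq> 0" by (simp add: D_def fps_nth_power_0)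
  then have "D \<noteq> 0" "subdegree D = 0" by (auto simp: subdegree_eq_0_iff)
  then have "fps_X ^ k / D * fps_of_poly (pcompose (losanitsch_poly (k + 2)) [:0, -1:])
      = (e_even_fps k * D) / D"
    using e_even_fps_mult_denominator[of k] by (simp add: D_def fps_divide_times2)
  also have "\<dots> = e_even_fps k" using \<open>D \<noteq> 0\<close> by (rule fps_divide_times_eq)
  finally show ?thesis unfolding D_def e_even_fps_def by simp
qed

end
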